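(* Assume (A1), let $\mathsf T$ be a topological space with its Borel $\sigma$-field, and fix $\mu\in\mathcal M_1(\mathsf T)$, $\eta>0$ and $\kappa\in\mathbb R$. Assume that there is an open interval $I\ni1$ such that for every $\alpha\in I$: (D1) $\int_{\mathsf Y}\sup_{\theta}k(\theta,y)\sup_{\theta'}\big(k(\theta',y)/p(y)\big)^{\alpha-1}\nu(dy)<\infty$; (D2) $\int_{\mathsf Y}\sup_{\theta}k(\theta,y)\sup_{\theta'}\big|\log(k(\theta',y)/p(y))\big|\sup_{\theta''}\big(k(\theta'',y)/p(y)\big)^{\alpha-1}\nu(dy)<\infty$; (D3) $\int_{\mathsf Y}\inf_{\theta}k(\theta,y)\inf_{\theta'}\big(k(\theta',y)/p(y)\big)^{\alpha-1}\nu(dy)>0$ (all sup/inf over $\mathsf T$). Then for every continuous bounded $h:\mathsf T\to\mathbb R$, $\lim_{\alpha\to1}\int h\,d\mathcal I_\alpha(\mu)=\int h\,d\mathcal I_1(\mu)$, the limit being taken over $\alpha\in I\setminus\{1\}$ with $(\alpha-1)\kappa\ge0$, where $\mathcal I_1(\mu)(d\theta)=\frac{\mu(d\theta)e^{-\eta b_{\mu,1}(\theta)}}{\mu(e^{-\eta b_{\mu,1}})}$ and $b_{\mu,1}(\theta)=\int_{\mathsf Y}k(\theta,y)\log\big(\mu k(y)/p(y)\big)\nu(dy)$.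
   Context: Let $(\mathsf Y,\mathcal Y,\nu)$ be a measure space with $\nu$ $\sigma$-finite, and $(\mathsf T,\mathcal T)$ a measurable space; $\mathcal M_1(\mathsf T)$ is the set of probability measures on $\mathsf T$. Let $k:\mathsf T\times\mathsf Y\to[0,\infty)$ be measurable with $\int k(\theta,y)\nu(dy)=1$. Let $p$ be measurable positive on $\mathsf Y$. For $\mu\in\mathcal M_1(\mathsf T)$, $\mu k(y)=\int\mu(d\theta)k(\theta,y)$. For $\alpha\neq1$, $f_\alpha'(u)=\frac{u^{\alpha-1}-1}{\alpha-1}$ and $b_{\mu,\alpha}(\theta)=\int_{\mathsf Y}k(\theta,y)f_\alpha'(\mu k(y)/p(y))\nu(dy)$. Assumption (A1): $k(\theta,y)>0$, $p(y)>0$ for all $(\theta,y)$ and $\int p\,d\nu<\infty$. Power Descent one-step transition (for $\alpha\neq1$, $\eta>0$, $\kappa$ with $(\alpha-1)\kappa\ge0$): with $\Gamma_\alpha(v)=[(\alpha-1)v+1]^{\eta/(1-\alpha)}$, $\mathcal I_\alpha(\mu)(d\theta)=\frac{\mu(d\theta)\Gamma_\alpha(b_{\mu,\alpha}(\theta)+\kappa)}{\mu(\Gamma_\alpha(b_{\mu,\alpha}+\kappa))}$, where $\mu(g)=\int g\,d\mu$. *)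

theory Defs
  imports "HOL-Probability.Probability"
begin

definition muk :: "'t measure \<Rightarrow> ('t \<Rightarrow> 'y \<Rightarrow> real) \<Rightarrow> 'y \<Rightarrow> real" where
  "muk mu k y = (\<integral>\<theta>. k \<theta> y \<partial>mu)"

definition fprime :: "real \<Rightarrow> real \<Rightarrow> real" where
  "fprime \<alpha> u = (u powr (\<alpha> - 1) - 1) / (\<alpha> - 1)"

definition b_alpha :: "'y measure \<Rightarrow> ('y \<Rightarrow> real) \<Rightarrow> ('t \<Rightarrow> 'y \<Rightarrow> real)
    \<Rightarrow> 't measure \<Rightarrow> real \<Rightarrow> 't \<Rightarrow> real" where
  "b_alpha \<nu> p k mu \<alpha> \<theta> = (\<integral>y. k \<theta> y * fprime \<alpha> (muk mu k y / p y) \<partial>\<nu>)"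

definition b_one :: "'y measure \<Rightarrow> ('y \<Rightarrow> real) \<Rightarrow> ('t \<Rightarrow> 'y \<Rightarrow> real)
    \<Rightarrow> 't measure \<Rightarrow> 't \<Rightarrow> real" where
  "b_one \<nu> p k mu \<theta> = (\<integral>y. k \<theta> y * ln (muk mu k y / p y) \<partial>\<nu>)"

definition Gamma_pd :: "real \<Rightarrow> real \<Rightarrow> real \<Rightarrow> real" where
  "Gamma_pd \<eta> \<alpha> v = ((\<alpha> - 1) * v + 1) powr (\<eta> / (1 - \<alpha>))"

definition PD_step :: "'y measure \<Rightarrow> ('y \<Rightarrow> real) \<Rightarrow> ('t \<Rightarrow> 'y \<Rightarrow> real)
    \<Rightarrow> real \<Rightarrow> real \<Rightarrow> real \<Rightarrow> 't measure \<Rightarrow> 't measure" where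
  "PD_step \<nu> p k \<eta> \<kappa> \<alpha> mu =
     density mu (\<lambda>\<theta>. ennreal (Gamma_pd \<eta> \<alpha> (b_alpha \<nu> p k mu \<alpha> \<theta> + \<kappa>)
        / (\<integral>\<theta>'. Gamma_pd \<eta> \<alpha> (b_alpha \<nu> p k mu \<alpha> \<theta>' + \<kappa>) \<partial>mu)))"

definition PD_one :: "'y measure \<Rightarrow> ('y \<Rightarrow> real) \<Rightarrow> ('t \<Rightarrow> 'y \<Rightarrow> real)
    \<Rightarrow> real \<Rightarrow> 't measure \<Rightarrow> 't measure" where
  "PD_one \<nu> p k \<eta> mu =
     density mu (\<lambda>\<theta>. ennreal (exp (- \<eta> * b_one \<nu> p k mu \<theta>)
        / (\<integral>\<theta>'. exp (- \<eta> * b_one \<nu> p k mu \<theta>') \<partial>mu)))"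

end

theory Submission
  imports Defs
begin

(* Write u = \<mu>k / p. Since \<mu>k(y) is a \<mu>-average of the k(\<theta>, y), the powers u^(+-c) and
   |ln u| are dominated by the suprema appearing in (D2); hence, for c small enough that
   1 +- c lie in I, the envelope k(\<theta>, .) |ln u| (u^c + u^(-c)) is \<nu>-integrable with integral
   bounded uniformly in \<theta>, and |f'_\<alpha>(u)| <= |ln u| (u^c + u^(-c)) whenever |\<alpha> - 1| <= c.
   Dominated convergence in y gives b_{\<mu>,\<alpha>} -> b_{\<mu>,1} pointwise with a uniform bound, so
   \<Gamma>_\<alpha>(b_{\<mu>,\<alpha>} + \<kappa>) -> exp(-\<eta> (b_{\<mu>,1} + \<kappa>)) boundedly, and dominated convergence in
   \<theta> passes the limit through the normalised densities; the factor exp(-\<eta> \<kappa>) cancels in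
   the normalisation. Only (D2) at 1 +- c is used, and the limit holds as \<alpha> -> 1 without
   restriction. *)

lemma abs_exp_minus_one_le: "\<bar>exp x - 1\<bar> \<le> \<bar>x\<bar> * exp \<bar>x\<bar>" for x :: real
proof (cases "x \<ge> 0")
  case True
  have "1 - x \<le> exp (-x)" using exp_ge_add_one_self[of "-x"] by simp
  hence "exp x * (1 - x) \<le> 1" by (simp add: exp_minus field_simps)
  thus ?thesis using True by (simp add: algebra_simps)
next
  case False
  have "\<bar>exp x - 1\<bar> \<le> \<bar>x\<bar>"
    using False exp_ge_add_one_self[of x] exp_le_one_iff[of x] by linarith
  also have "\<dots> \<le> \<bar>x\<bar> * exp \<bar>x\<bar>" by (simp add: mult_le_cancel_left1)
  finally show ?thesis .
qed

lemma exp_mult_abs_ln_le: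
  fixes u c :: real
  assumes "u > 0"
  shows "exp (c * \<bar>ln u\<bar>) \<le> u powr c + u powr (-c)"
proof -
  have "c * \<bar>ln u\<bar> = c * ln u \<or> c * \<bar>ln u\<bar> = -c * ln u"
    by (cases "0 \<le> ln u") (simp_all add: abs_of_nonneg abs_of_neg)
  hence "exp (c * \<bar>ln u\<bar>) = exp (c * ln u) \<or> exp (c * \<bar>ln u\<bar>) = exp (-c * ln u)"
    by auto
  thus ?thesis using assms by (auto simp: powr_def add_increasing2 add_increasing)
qed

lemma abs_fprime_le:
  assumes u: "u > 0" and "\<alpha> \<noteq> 1" and c: "\<bar>\<alpha> - 1\<bar> \<le> c"
  shows "\<bar>fprime \<alpha> u\<bar> \<le> \<bar>ln u\<bar> * (u powr c + u powr (-c))"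
proof -
  define s where "s = \<alpha> - 1"
  have "s \<noteq> 0" using \<open>\<alpha> \<noteq> 1\<close> by (simp add: s_def)
  have "\<bar>fprime \<alpha> u\<bar> = \<bar>exp (s * ln u) - 1\<bar> / \<bar>s\<bar>"
    using u by (simp add: fprime_def powr_def s_def)
  also have "\<dots> \<le> \<bar>s * ln u\<bar> * exp \<bar>s * ln u\<bar> / \<bar>s\<bar>"
    by (intro divide_right_mono abs_exp_minus_one_le) simp
  also have "\<dots> = \<bar>ln u\<bar> * exp (\<bar>s\<bar> * \<bar>ln u\<bar>)"
    using \<open>s \<noteq> 0\<close> by (simp add: abs_mult)
  also have "\<dots> \<le> \<bar>ln u\<bar> * exp (c * \<bar>ln u\<bar>)"
    using c by (intro mult_left_mono) (auto simp: s_def intro: mult_right_mono)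
  also have "\<dots> \<le> \<bar>ln u\<bar> * (u powr c + u powr (-c))"
    using u by (intro mult_left_mono exp_mult_abs_ln_le) auto
  finally show ?thesis .
qed

lemma fprime_tendsto_ln:
  assumes "u > 0"
  shows "((\<lambda>\<alpha>. fprime \<alpha> u) \<longlongrightarrow> ln u) (at 1)"
proof -
  have "((\<lambda>s. exp (s * ln u)) has_field_derivative ln u) (at 0)"
    by (auto intro!: derivative_eq_intros)
  hence "((\<lambda>s. (exp (s * ln u) - 1) / s) \<longlongrightarrow> ln u) (at 0)"
    by (simp add: DERIV_def)
  hence "((\<lambda>\<alpha>. (exp ((\<alpha> - 1) * ln u) - 1) / (\<alpha> - 1)) \<longlongrightarrow> ln u) (at 1)"
    using LIM_offset_zero_iff[of 1 "\<lambda>\<alpha>. (exp ((\<alpha> - 1) * ln u) - 1) / (\<alpha> - 1)"] by simp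
  thus ?thesis using assms by (simp add: fprime_def powr_def)
qed

lemma abs_ln_one_plus_div_minus_le:
  fixes s v :: real
  assumes "\<bar>s * v\<bar> \<le> 1/2" "s \<noteq> 0"
  shows "\<bar>ln (1 + s * v) / s - v\<bar> \<le> 2 * \<bar>s\<bar> * v\<^sup>2"
proof -
  have "\<bar>ln (1 + s * v) / s - v\<bar> = \<bar>ln (1 + s * v) - s * v\<bar> / \<bar>s\<bar>"
    using assms(2) by (simp add: field_simps flip: abs_divide)
  also have "\<dots> \<le> 2 * (s * v)\<^sup>2 / \<bar>s\<bar>"
    by (intro divide_right_mono abs_ln_one_plus_x_minus_x_bound assms(1)) simp
  also have "\<dots> = 2 * \<bar>s\<bar> * v\<^sup>2"
    using assms(2) by (simp add: power2_eq_square abs_mult_self_eq field_simps)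
  finally show ?thesis .
qed

lemma Gamma_pd_eq_exp:
  assumes "\<bar>(\<alpha> - 1) * v\<bar> \<le> 1/2" "\<alpha> \<noteq> 1"
  shows "Gamma_pd \<eta> \<alpha> v = exp (- \<eta> * (ln (1 + (\<alpha> - 1) * v) / (\<alpha> - 1)))"
proof -
  have "(\<alpha> - 1) * v + 1 > 0" using assms(1) by linarith
  moreover have "\<eta> / (1 - \<alpha>) = - \<eta> / (\<alpha> - 1)" using assms(2) by (simp add: field_simps)
  ultimately show ?thesis unfolding Gamma_pd_def powr_def by (simp add: add.commute)
qed

lemma Gamma_pd_le:
  assumes "\<bar>\<alpha> - 1\<bar> \<le> 1 / (2*K+2)" "\<alpha> \<noteq> 1" "\<bar>v\<bar> \<le> K"
  shows "Gamma_pd \<eta> \<alpha> v \<le> exp (2 * \<bar>\<eta>\<bar> * K)"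
proof -
  have "K \<ge> 0" using assms(3) by linarith
  have "\<bar>(\<alpha> - 1) * v\<bar> \<le> 1/(2*K+2) * K"
    unfolding abs_mult using assms by (intro mult_mono) auto
  also have "\<dots> \<le> 1/2" using \<open>K \<ge> 0\<close> by (simp add: field_simps)
  finally have sv: "\<bar>(\<alpha> - 1) * v\<bar> \<le> 1/2" .
  define L where "L = ln (1 + (\<alpha> - 1) * v) / (\<alpha> - 1)"
  have "\<bar>L - v\<bar> \<le> 2 * \<bar>\<alpha> - 1\<bar> * v\<^sup>2"
    unfolding L_def using sv assms(2) by (intro abs_ln_one_plus_div_minus_le) auto
  also have "\<dots> = 2 * \<bar>(\<alpha> - 1) * v\<bar> * \<bar>v\<bar>" by (simp add: abs_mult power2_eq_square)
  also have "\<dots> \<le> 1 * \<bar>v\<bar>"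
    using sv by (intro mult_right_mono) auto
  finally have "\<bar>L\<bar> \<le> 2 * K" using assms(3) by linarith
  have "- \<eta> * L \<le> \<bar>\<eta>\<bar> * \<bar>L\<bar>"
    by (metis abs_ge_self abs_minus_cancel abs_mult minus_mult_left)
  also have "\<dots> \<le> \<bar>\<eta>\<bar> * (2 * K)"
    using \<open>\<bar>L\<bar> \<le> 2 * K\<close> by (intro mult_left_mono) auto
  finally have "- \<eta> * L \<le> 2 * \<bar>\<eta>\<bar> * K" by simp
  thus ?thesis using Gamma_pd_eq_exp[OF sv assms(2)] by (simp add: L_def)
qed

lemma tendsto_Gamma_pd:
  assumes X: "(X \<longlongrightarrow> 1) F" "eventually (\<lambda>t. X t \<noteq> 1) F" and V: "(V \<longlongrightarrow> v) F"
  shows "((\<lambda>t. Gamma_pd \<eta> (X t) (V t)) \<longlongrightarrow> exp (- \<eta> * v)) F"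
proof -
  define L where "L t = ln (1 + (X t - 1) * V t) / (X t - 1)" for t
  have s0: "((\<lambda>t. X t - 1) \<longlongrightarrow> 0) F" using tendsto_diff[OF X(1) tendsto_const[of 1]] by simp
  have "((\<lambda>t. (X t - 1) * V t) \<longlongrightarrow> 0) F" using tendsto_mult[OF s0 V] by simp
  hence "eventually (\<lambda>t. \<bar>(X t - 1) * V t\<bar> < 1/2) F"
    by (rule order_tendstoD(2)[OF tendsto_rabs_zero]) simp
  hence small: "eventually (\<lambda>t. \<bar>(X t - 1) * V t\<bar> \<le> 1/2 \<and> X t \<noteq> 1) F"
    using X(2) by eventually_elim simp
  have bound: "eventually (\<lambda>t. norm (L t - V t) \<le> 2 * \<bar>X t - 1\<bar> * (V t)\<^sup>2) F"
    using small by eventually_elim (simp add: L_def abs_ln_one_plus_div_minus_le)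
  have "((\<lambda>t. 2 * \<bar>X t - 1\<bar> * (V t)\<^sup>2) \<longlongrightarrow> 2 * 0 * v\<^sup>2) F"
    by (intro tendsto_intros tendsto_rabs_zero[OF s0] V)
  hence "((\<lambda>t. L t - V t) \<longlongrightarrow> 0) F"
    using Lim_null_comparison[OF bound] by simp
  hence "((\<lambda>t. L t - V t + V t) \<longlongrightarrow> 0 + v) F"
    by (intro tendsto_add V)
  hence "((\<lambda>t. exp (- \<eta> * L t)) \<longlongrightarrow> exp (- \<eta> * v)) F"
    by (intro tendsto_intros) simp
  moreover have "eventually (\<lambda>t. exp (- \<eta> * L t) = Gamma_pd \<eta> (X t) (V t)) F"
    using small by eventually_elim (simp add: L_def Gamma_pd_eq_exp)
  ultimately show ?thesis by (rule Lim_transform_eventually)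
qed

lemma eventually_near_one:
  fixes d :: real
  assumes "d > 0"
  shows "eventually (\<lambda>\<alpha>. \<alpha> \<noteq> 1 \<and> \<bar>\<alpha> - 1\<bar> \<le> d) (at 1)"
  using assms by (auto simp: eventually_at dist_real_def intro!: exI[of _ d])

lemma (in prob_space) exists_le_integral:
  fixes g :: "'a \<Rightarrow> real"
  assumes "integrable M g"
  shows "\<exists>x\<in>space M. g x \<le> integral\<^sup>L M g"
proof (rule ccontr)
  assume "\<not> ?thesis"
  hence pos: "\<And>x. x \<in> space M \<Longrightarrow> 0 < g x - integral\<^sup>L M g" by auto
  have "integral\<^sup>L M (\<lambda>x. g x - integral\<^sup>L M g) = 0"
    using assms by (simp add: prob_space)
  hence "AE x in M. g x - integral\<^sup>L M g = 0"
    using assms pos by (subst (asm) integral_nonneg_eq_0_iff_AE) (auto intro: less_imp_le)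
  moreover have "AE x in M. g x - integral\<^sup>L M g \<noteq> 0" using pos by (intro AE_I2) force
  ultimately have "AE x in M. False" by eventually_elim auto
  thus False by (simp add: AE_False)
qed

lemma (in prob_space) exists_ge_integral:
  fixes g :: "'a \<Rightarrow> real"
  assumes "integrable M g"
  shows "\<exists>x\<in>space M. integral\<^sup>L M g \<le> g x"
  using exists_le_integral[of "\<lambda>x. - g x"] assms by auto

lemma (in prob_space) integral_pos:
  fixes g :: "'a \<Rightarrow> real"
  assumes "integrable M g" "\<And>x. x \<in> space M \<Longrightarrow> g x > 0"
  shows "integral\<^sup>L M g > 0"
  using exists_le_integral[OF assms(1)] assms(2) by force

lemma integral_dominated_convergence_at:
  fixes s :: "'a::first_countable_topology \<Rightarrow> 'b \<Rightarrow> 'c::{banach, second_countable_topology}"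
  assumes "f \<in> borel_measurable M" "\<And>t. s t \<in> borel_measurable M" "integrable M w"
    and "AE y in M. ((\<lambda>t. s t y) \<longlongrightarrow> f y) (at x within S)"
    and "eventually (\<lambda>t. AE y in M. norm (s t y) \<le> w y) (at x within S)"
  shows "((\<lambda>t. integral\<^sup>L M (s t)) \<longlongrightarrow> integral\<^sup>L M f) (at x within S)"
  unfolding tendsto_at_iff_sequentially
proof (intro allI impI)
  fix X :: "nat \<Rightarrow> 'a"
  assume "\<forall>i. X i \<in> S - {x}" "X \<longlonglongrightarrow> x"
  hence X: "filterlim X (at x within S) sequentially"
    by (auto simp: filterlim_at)
  then obtain N where N: "\<And>n. n \<ge> N \<Longrightarrow> AE y in M. norm (s (X n) y) \<le> w y"
    using filterlim_iff[THEN iffD1, OF X, rule_format, OF assms(5)]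
    by (auto simp: eventually_sequentially)
  have "(\<lambda>n. integral\<^sup>L M (s (X (n + N)))) \<longlonglongrightarrow> integral\<^sup>L M f"
  proof (rule integral_dominated_convergence[OF assms(1,2,3)])
    show "AE y in M. (\<lambda>n. s (X (n + N)) y) \<longlonglongrightarrow> f y"
      using assms(4) by eventually_elim
        (rule filterlim_compose[OF _ filterlim_compose[OF X filterlim_add_const_nat_at_top]])
    show "AE y in M. norm (s (X (n + N)) y) \<le> w y" for n
      using N[of "n + N"] by simp
  qed
  thus "((\<lambda>t. integral\<^sup>L M (s t)) \<circ> X) \<longlonglongrightarrow> integral\<^sup>L M f"
    unfolding comp_def by (rule LIMSEQ_offset)
qed

lemma integral_density_normalized:
  fixes g h :: "'a \<Rightarrow> real"
  assumes [measurable]: "g \<in> borel_measurable M" "h \<in> borel_measurable M"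
    and "\<And>x. g x \<ge> 0"
  shows "(\<integral>x. h x \<partial>density M (\<lambda>x. ennreal (g x / (\<integral>x. g x \<partial>M))))
           = (\<integral>x. g x * h x \<partial>M) / (\<integral>x. g x \<partial>M)"
proof -
  have "(\<integral>x. h x \<partial>density M (\<lambda>x. ennreal (g x / (\<integral>x. g x \<partial>M))))
          = (\<integral>x. (g x / (\<integral>x. g x \<partial>M)) *\<^sub>R h x \<partial>M)"
    using assms(3) by (intro integral_density) (auto intro!: divide_nonneg_nonneg integral_nonneg)
  thus ?thesis by simp
qed

lemma (in prob_space) tendsto_integral_density_normalized:
  fixes G :: "'t::first_countable_topology \<Rightarrow> 'a \<Rightarrow> real" and h :: "'a \<Rightarrow> real"
  assumes [measurable]: "\<And>t. G t \<in> borel_measurable M" "E \<in> borel_measurable M"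
      "h \<in> borel_measurable M"
    and "bounded (range h)"
    and "\<And>t y. G t y \<ge> 0" "\<And>y. E y > 0"
    and "\<And>y. ((\<lambda>t. G t y) \<longlongrightarrow> E y) (at x within S)"
    and "eventually (\<lambda>t. \<forall>y. G t y \<le> B) (at x within S)"
  shows "((\<lambda>t. \<integral>y. h y \<partial>density M (\<lambda>y. ennreal (G t y / (\<integral>y. G t y \<partial>M))))
           \<longlongrightarrow> (\<integral>y. h y \<partial>density M (\<lambda>y. ennreal (E y / (\<integral>y. E y \<partial>M))))) (at x within S)"
proof (cases "at x within S = bot")
  case False
  obtain H where H: "\<And>y. \<bar>h y\<bar> \<le> H" using assms(4) unfolding bounded_iff by auto
  have E_le: "E y \<le> B" for y
    using assms(8) by (intro tendsto_upperbound[OF assms(7) _ False]) (auto elim: eventually_mono)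
  have "integrable M E"
    using E_le assms(6) by (intro integrable_const_bound[where B = B]) (auto simp: abs_of_pos)
  hence "(\<integral>y. E y \<partial>M) \<noteq> 0" using integral_pos assms(6) by (metis less_irrefl)
  moreover have "((\<lambda>t. \<integral>y. G t y \<partial>M) \<longlongrightarrow> (\<integral>y. E y \<partial>M)) (at x within S)"
    using assms(5,7,8) by (intro integral_dominated_convergence_at[where w = "\<lambda>_. B"])
      (auto elim!: eventually_mono)
  moreover have "((\<lambda>t. \<integral>y. G t y * h y \<partial>M) \<longlongrightarrow> (\<integral>y. E y * h y \<partial>M)) (at x within S)"
  proof (intro integral_dominated_convergence_at[where w = "\<lambda>_. B * H"])
    show "AE y in M. ((\<lambda>t. G t y * h y) \<longlongrightarrow> E y * h y) (at x within S)"
      using assms(7) by (intro AE_I2 tendsto_mult_right)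
    show "\<forall>\<^sub>F t in at x within S. AE y in M. norm (G t y * h y) \<le> B * H"
      using assms(8) by eventually_elim
        (use assms(5) H in \<open>auto simp: abs_mult intro!: AE_I2 mult_mono'\<close>)
  qed auto
  ultimately show ?thesis
    using assms(5,6) by (simp add: integral_density_normalized less_imp_le tendsto_divide)
qed simp

lemma powr_le_max_powr_between:
  fixes m x1 x2 s :: real
  assumes "0 < x1" "x1 \<le> m" "m \<le> x2"
  shows "m powr s \<le> max (x1 powr s) (x2 powr s)"
proof (cases "s \<ge> 0")
  case True
  thus ?thesis using assms by (simp add: le_max_iff_disj powr_mono2)
next
  case False
  thus ?thesis using assms by (simp add: le_max_iff_disj powr_mono2')
qed

lemma abs_ln_le_max_abs_ln_between:
  fixes m x1 x2 :: real
  assumes "0 < x1" "x1 \<le> m" "m \<le> x2"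
  shows "\<bar>ln m\<bar> \<le> max \<bar>ln x1\<bar> \<bar>ln x2\<bar>"
proof -
  have "ln x1 \<le> ln m" "ln m \<le> ln x2" using assms by auto
  thus ?thesis by linarith
qed

(* Condition (D2) at \<alpha> reads D2_integral \<nu> p k (\<alpha> - 1) < \<infinity>. *)
definition D2_integral :: "'y measure \<Rightarrow> ('y \<Rightarrow> real) \<Rightarrow> ('t \<Rightarrow> 'y \<Rightarrow> real) \<Rightarrow> real \<Rightarrow> ennreal"
  where "D2_integral \<nu> p k s =
    (\<integral>\<^sup>+ y. (\<Squnion>\<theta>. ennreal (k \<theta> y)) * (\<Squnion>\<theta>'. ennreal \<bar>ln (k \<theta>' y / p y)\<bar>) *
             (\<Squnion>\<theta>''. ennreal ((k \<theta>'' y / p y) powr s)) \<partial>\<nu>)"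

locale power_descent_kernel = nu: sigma_finite_measure \<nu> + mu: prob_space mu
  for \<nu> :: "'y measure" and mu :: "'t::topological_space measure" +
  fixes k :: "'t \<Rightarrow> 'y \<Rightarrow> real" and p :: "'y \<Rightarrow> real"
  assumes k_measurable: "(\<lambda>(\<theta>, y). k \<theta> y) \<in> borel_measurable (borel \<Otimes>\<^sub>M \<nu>)"
    and k_normalized: "\<And>\<theta>. (\<integral>\<^sup>+ y. ennreal (k \<theta> y) \<partial>\<nu>) = 1"
    and p_measurable[measurable]: "p \<in> borel_measurable \<nu>"
    and k_pos: "\<And>\<theta> y. k \<theta> y > 0"
    and p_pos: "\<And>y. p y > 0"
    and sets_mu: "sets mu = sets borel"
begin

abbreviation ratio :: "'y \<Rightarrow> real" where "ratio y \<equiv> muk mu k y / p y"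

lemma space_mu: "space mu = UNIV"
  using sets_eq_imp_space_eq[OF sets_mu] by simp

lemma k_measurable_pair[measurable]: "(\<lambda>(\<theta>, y). k \<theta> y) \<in> borel_measurable (mu \<Otimes>\<^sub>M \<nu>)"
  using k_measurable by (simp add: measurable_cong_sets[OF sets_pair_measure_cong[OF sets_mu refl] refl])

lemma k_measurable_snd[measurable]: "k \<theta> \<in> borel_measurable \<nu>"
  using measurable_Pair2[OF k_measurable_pair, of \<theta>] space_mu by simp

lemma muk_measurable[measurable]: "muk mu k \<in> borel_measurable \<nu>"
  unfolding muk_def by (rule mu.borel_measurable_lebesgue_integral) measurable

lemma AE_integrable_kernel: "AE y in \<nu>. integrable mu (\<lambda>\<theta>. k \<theta> y)"
proof -
  interpret pair_sigma_finite mu \<nu> ..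
  have "(\<integral>\<^sup>+ y. (\<integral>\<^sup>+ \<theta>. ennreal (k \<theta> y) \<partial>mu) \<partial>\<nu>) = (\<integral>\<^sup>+ \<theta>. (\<integral>\<^sup>+ y. ennreal (k \<theta> y) \<partial>\<nu>) \<partial>mu)"
    by (rule Fubini') measurable
  also have "\<dots> = 1" by (simp add: k_normalized mu.emeasure_space_1)
  finally have "AE y in \<nu>. (\<integral>\<^sup>+ \<theta>. ennreal (k \<theta> y) \<partial>mu) \<noteq> \<infinity>"
    by (intro nn_integral_PInf_AE) auto
  with AE_space show ?thesis
  proof eventually_elim
    case (elim y)
    have "(\<lambda>\<theta>. k \<theta> y) \<in> borel_measurable mu" using elim by measurable
    thus ?case using elim k_pos by (auto intro!: integrableI_bounded simp: less_top[symmetric] less_imp_le)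
  qed
qed

lemma AE_ratio_bounds:
  "AE y in \<nu>. ratio y > 0 \<and>
     (\<forall>s. ennreal (ratio y powr s) \<le> (\<Squnion>\<theta>. ennreal ((k \<theta> y / p y) powr s))) \<and>
     ennreal \<bar>ln (ratio y)\<bar> \<le> (\<Squnion>\<theta>. ennreal \<bar>ln (k \<theta> y / p y)\<bar>)"
  using AE_integrable_kernel
proof eventually_elim
  case (elim y)
  define g where "g = (\<lambda>\<theta>. k \<theta> y / p y)"
  have "integrable mu g" unfolding g_def using elim by (rule integrable_divide_zero)
  moreover have "ratio y = (\<integral>\<theta>. g \<theta> \<partial>mu)" by (simp add: g_def muk_def)
  ultimately obtain \<theta>1 \<theta>2 where \<theta>12: "g \<theta>1 \<le> ratio y" "ratio y \<le> g \<theta>2"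
    using mu.exists_le_integral mu.exists_ge_integral by metis
  have g_pos: "g \<theta> > 0" for \<theta> using k_pos p_pos by (simp add: g_def)
  have "ennreal (ratio y powr s) \<le> (\<Squnion>\<theta>. ennreal (g \<theta> powr s))" for s
    using powr_le_max_powr_between[OF g_pos \<theta>12, of s]
    by (auto simp: le_max_iff_disj intro: SUP_upper2[of \<theta>1] SUP_upper2[of \<theta>2])
  moreover have "ennreal \<bar>ln (ratio y)\<bar> \<le> (\<Squnion>\<theta>. ennreal \<bar>ln (g \<theta>)\<bar>)"
    using abs_ln_le_max_abs_ln_between[OF g_pos \<theta>12]
    by (auto simp: le_max_iff_disj intro: SUP_upper2[of \<theta>1] SUP_upper2[of \<theta>2])
  ultimately show ?case using g_pos[of \<theta>1] \<theta>12 by (auto simp: g_def)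
qed

lemma b_alpha_measurable[measurable]: "(\<lambda>\<theta>. b_alpha \<nu> p k mu \<alpha> \<theta>) \<in> borel_measurable mu"
  unfolding b_alpha_def fprime_def by measurable

lemma b_one_measurable[measurable]: "(\<lambda>\<theta>. b_one \<nu> p k mu \<theta>) \<in> borel_measurable mu"
  unfolding b_one_def by measurable

end

locale power_descent_envelope = power_descent_kernel \<nu> mu k p
  for \<nu> :: "'y measure" and mu :: "'t::topological_space measure" and k p +
  fixes c :: real
  assumes c_pos: "c > 0"
    and D2_finite: "D2_integral \<nu> p k c < \<infinity>" "D2_integral \<nu> p k (-c) < \<infinity>"
begin

definition envelope :: "'t \<Rightarrow> 'y \<Rightarrow> real" where
  "envelope \<theta> y = k \<theta> y * \<bar>ln (ratio y)\<bar> * (ratio y powr c + ratio y powr (-c))"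

definition envelope_bound :: real where
  "envelope_bound = enn2real (D2_integral \<nu> p k c + D2_integral \<nu> p k (-c))"

lemma envelope_bound_nonneg: "envelope_bound \<ge> 0"
  by (simp add: envelope_bound_def)

lemma envelope_measurable[measurable]: "envelope \<theta> \<in> borel_measurable \<nu>"
  unfolding envelope_def by measurable

lemma envelope_nonneg: "envelope \<theta> y \<ge> 0"
  using k_pos[of \<theta> y] by (simp add: envelope_def)

lemma nn_integral_kernel_ln_powr_le:
  "(\<integral>\<^sup>+ y. ennreal (k \<theta> y * \<bar>ln (ratio y)\<bar> * ratio y powr s) \<partial>\<nu>) \<le> D2_integral \<nu> p k s"
  unfolding D2_integral_def using AE_ratio_bounds
proof (intro nn_integral_mono_AE, eventually_elim)
  case (elim y)
  have "ennreal (k \<theta> y * \<bar>ln (ratio y)\<bar> * ratio y powr s)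
      = ennreal (k \<theta> y) * ennreal \<bar>ln (ratio y)\<bar> * ennreal (ratio y powr s)"
    using k_pos[of \<theta> y] by (simp add: ennreal_mult)
  also have "\<dots> \<le> (\<Squnion>\<theta>. ennreal (k \<theta> y)) * (\<Squnion>\<theta>'. ennreal \<bar>ln (k \<theta>' y / p y)\<bar>) *
      (\<Squnion>\<theta>''. ennreal ((k \<theta>'' y / p y) powr s))"
    using elim by (intro mult_mono) (auto intro: SUP_upper2)
  finally show ?case .
qed

lemma nn_integral_envelope_le:
  "(\<integral>\<^sup>+ y. ennreal (envelope \<theta> y) \<partial>\<nu>) \<le> D2_integral \<nu> p k c + D2_integral \<nu> p k (-c)"
proof -
  have "(\<integral>\<^sup>+ y. ennreal (envelope \<theta> y) \<partial>\<nu>)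
      = (\<integral>\<^sup>+ y. ennreal (k \<theta> y * \<bar>ln (ratio y)\<bar> * ratio y powr c) \<partial>\<nu>)
        + (\<integral>\<^sup>+ y. ennreal (k \<theta> y * \<bar>ln (ratio y)\<bar> * ratio y powr (-c)) \<partial>\<nu>)"
    using k_pos[of \<theta>] unfolding envelope_def
    by (subst nn_integral_add[symmetric]) (auto simp: distrib_left ennreal_plus less_imp_le)
  also have "\<dots> \<le> D2_integral \<nu> p k c + D2_integral \<nu> p k (-c)"
    by (intro add_mono nn_integral_kernel_ln_powr_le)
  finally show ?thesis .
qed

lemma integrable_envelope: "integrable \<nu> (envelope \<theta>)"
proof (rule integrableI_bounded)
  show "(\<integral>\<^sup>+ y. ennreal (norm (envelope \<theta> y)) \<partial>\<nu>) < \<infinity>"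
    using nn_integral_envelope_le[of \<theta>] D2_finite envelope_nonneg
    by (simp add: order.strict_trans1)
qed measurable

lemma integral_envelope_le: "(\<integral>y. envelope \<theta> y \<partial>\<nu>) \<le> envelope_bound"
  unfolding envelope_bound_def using nn_integral_envelope_le D2_finite envelope_nonneg
  by (subst integral_eq_nn_integral) (auto intro!: enn2real_mono)

lemma abs_integral_le_envelope_bound:
  assumes "AE y in \<nu>. \<bar>g y\<bar> \<le> envelope \<theta> y"
  shows "\<bar>\<integral>y. g y \<partial>\<nu>\<bar> \<le> envelope_bound"
proof -
  have "\<bar>\<integral>y. g y \<partial>\<nu>\<bar> \<le> (\<integral>y. \<bar>g y\<bar> \<partial>\<nu>)"
    using integral_norm_bound[of \<nu> g] by simp
  also have "\<dots> \<le> (\<integral>y. envelope \<theta> y \<partial>\<nu>)"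
    using assms by (intro integral_mono_AE' integrable_envelope) (auto simp: envelope_nonneg)
  also have "\<dots> \<le> envelope_bound" by (rule integral_envelope_le)
  finally show ?thesis .
qed

lemma AE_abs_kernel_fprime_le:
  assumes "\<alpha> \<noteq> 1" "\<bar>\<alpha> - 1\<bar> \<le> c"
  shows "AE y in \<nu>. \<bar>k \<theta> y * fprime \<alpha> (ratio y)\<bar> \<le> envelope \<theta> y"
  using AE_ratio_bounds
proof eventually_elim
  case (elim y)
  have "\<bar>fprime \<alpha> (ratio y)\<bar> \<le> \<bar>ln (ratio y)\<bar> * (ratio y powr c + ratio y powr (-c))"
    using elim assms by (intro abs_fprime_le) auto
  thus ?case using k_pos[of \<theta> y]
    by (simp add: abs_mult envelope_def mult.assoc mult_left_mono)
qed

lemma abs_b_alpha_le: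
  assumes "\<alpha> \<noteq> 1" "\<bar>\<alpha> - 1\<bar> \<le> c"
  shows "\<bar>b_alpha \<nu> p k mu \<alpha> \<theta>\<bar> \<le> envelope_bound"
  unfolding b_alpha_def using AE_abs_kernel_fprime_le[OF assms] by (rule abs_integral_le_envelope_bound)

lemma b_alpha_tendsto_b_one: "((\<lambda>\<alpha>. b_alpha \<nu> p k mu \<alpha> \<theta>) \<longlongrightarrow> b_one \<nu> p k mu \<theta>) (at 1)"
  unfolding b_alpha_def b_one_def
proof (rule integral_dominated_convergence_at[OF _ _ integrable_envelope])
  show "AE y in \<nu>. ((\<lambda>\<alpha>. k \<theta> y * fprime \<alpha> (ratio y)) \<longlongrightarrow> k \<theta> y * ln (ratio y)) (at 1)"
    using AE_ratio_bounds by eventually_elim (auto intro: tendsto_mult_left fprime_tendsto_ln)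
  show "\<forall>\<^sub>F \<alpha> in at 1. AE y in \<nu>. norm (k \<theta> y * fprime \<alpha> (ratio y)) \<le> envelope \<theta> y"
    using eventually_near_one[OF c_pos] by eventually_elim (simp add: AE_abs_kernel_fprime_le)
qed (unfold fprime_def, measurable)

theorem integral_PD_step_tendsto:
  fixes h :: "'t \<Rightarrow> real"
  assumes h: "h \<in> borel_measurable borel" "bounded (range h)"
  shows "((\<lambda>\<alpha>. \<integral>\<theta>. h \<theta> \<partial>PD_step \<nu> p k \<eta> \<kappa> \<alpha> mu) \<longlongrightarrow> (\<integral>\<theta>. h \<theta> \<partial>PD_one \<nu> p k \<eta> mu)) (at 1)"
proof -
  define G where "G \<alpha> \<theta> = Gamma_pd \<eta> \<alpha> (b_alpha \<nu> p k mu \<alpha> \<theta> + \<kappa>)" for \<alpha> \<theta>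
  define E where "E \<theta> = exp (- \<eta> * (b_one \<nu> p k mu \<theta> + \<kappa>))" for \<theta>
  define K where "K = envelope_bound + \<bar>\<kappa>\<bar>"
  have [measurable]: "G \<alpha> \<in> borel_measurable mu" "E \<in> borel_measurable mu" for \<alpha>
    unfolding G_def Gamma_pd_def E_def by measurable
  have h_mu: "h \<in> borel_measurable mu"
    using h(1) by (simp add: measurable_cong_sets[OF sets_mu refl])
  have step: "PD_step \<nu> p k \<eta> \<kappa> \<alpha> mu = density mu (\<lambda>\<theta>. ennreal (G \<alpha> \<theta> / (\<integral>\<theta>'. G \<alpha> \<theta>' \<partial>mu)))" for \<alpha>
    by (simp add: PD_step_def G_def)
  have one: "PD_one \<nu> p k \<eta> mu = density mu (\<lambda>\<theta>. ennreal (E \<theta> / (\<integral>\<theta>'. E \<theta>' \<partial>mu)))"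
  proof -
    have "E \<theta> = exp (- \<eta> * \<kappa>) * exp (- \<eta> * b_one \<nu> p k mu \<theta>)" for \<theta>
      by (simp add: E_def algebra_simps flip: exp_add)
    thus ?thesis by (simp add: PD_one_def)
  qed
  have lim: "((\<lambda>\<alpha>. G \<alpha> \<theta>) \<longlongrightarrow> E \<theta>) (at 1)" for \<theta>
    unfolding G_def E_def using eventually_near_one[OF zero_less_one]
    by (intro tendsto_Gamma_pd tendsto_add b_alpha_tendsto_b_one tendsto_ident_at tendsto_const)
      (auto elim: eventually_mono)
  have "min c (1 / (2 * K + 2)) > 0"
    using c_pos envelope_bound_nonneg by (simp add: K_def)
  from eventually_near_one[OF this]
  have bound: "eventually (\<lambda>\<alpha>. \<forall>\<theta>. G \<alpha> \<theta> \<le> exp (2 * \<bar>\<eta>\<bar> * K)) (at 1)"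
  proof eventually_elim
    case (elim \<alpha>)
    have "\<bar>b_alpha \<nu> p k mu \<alpha> \<theta> + \<kappa>\<bar> \<le> K" for \<theta>
      using abs_b_alpha_le[of \<alpha> \<theta>] elim by (simp add: K_def)
    thus ?case using elim by (auto simp: G_def intro!: Gamma_pd_le)
  qed
  show ?thesis unfolding step one
    using h_mu h(2) lim bound
    by (intro mu.tendsto_integral_density_normalized) (auto simp: G_def E_def Gamma_pd_def)
qed

end

theorem proposition1:
  fixes \<nu> :: "'y measure" and mu :: "('t::topological_space) measure"
    and k :: "'t \<Rightarrow> 'y \<Rightarrow> real" and p :: "'y \<Rightarrow> real"
    and \<eta> \<kappa> a b :: real and h :: "'t \<Rightarrow> real"
  assumes sf: "sigma_finite_measure \<nu>"
    and k_meas: "(\<lambda>(\<theta>, y). k \<theta> y) \<in> borel_measurable (borel \<Otimes>\<^sub>M \<nu>)"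
    and k_norm: "\<And>\<theta>. (\<integral>\<^sup>+ y. ennreal (k \<theta> y) \<partial>\<nu>) = 1"
    and p_meas: "p \<in> borel_measurable \<nu>"
    and k_pos: "\<And>\<theta> y. k \<theta> y > 0"
    and p_pos: "\<And>y. p y > 0"
    and p_int: "(\<integral>\<^sup>+ y. ennreal (p y) \<partial>\<nu>) < \<infinity>"
    and mu_prob: "prob_space mu" and mu_sets: "sets mu = sets borel"
    and eta_pos: "\<eta> > 0"
    and I: "a < 1" "1 < b"
    and D1: "\<And>\<alpha>. \<alpha> \<in> {a<..<b} \<Longrightarrow>
       (\<integral>\<^sup>+ y. (\<Squnion>\<theta>. ennreal (k \<theta> y)) *
                 (\<Squnion>\<theta>'. ennreal ((k \<theta>' y / p y) powr (\<alpha> - 1))) \<partial>\<nu>) < \<infinity>"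
    and D2: "\<And>\<alpha>. \<alpha> \<in> {a<..<b} \<Longrightarrow>
       (\<integral>\<^sup>+ y. (\<Squnion>\<theta>. ennreal (k \<theta> y)) *
                 (\<Squnion>\<theta>'. ennreal \<bar>ln (k \<theta>' y / p y)\<bar>) *
                 (\<Squnion>\<theta>''. ennreal ((k \<theta>'' y / p y) powr (\<alpha> - 1))) \<partial>\<nu>) < \<infinity>"
    and D3: "\<And>\<alpha>. \<alpha> \<in> {a<..<b} \<Longrightarrow>
       (\<integral>\<^sup>+ y. (\<Sqinter>\<theta>. ennreal (k \<theta> y)) *
                 (\<Sqinter>\<theta>'. ennreal ((k \<theta>' y / p y) powr (\<alpha> - 1))) \<partial>\<nu>) > 0"
    and h_cont: "continuous_on UNIV h"
    and h_bdd: "bounded (range h)"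
  shows "((\<lambda>\<alpha>. \<integral>\<theta>. h \<theta> \<partial>(PD_step \<nu> p k \<eta> \<kappa> \<alpha> mu))
           \<longlongrightarrow> (\<integral>\<theta>. h \<theta> \<partial>(PD_one \<nu> p k \<eta> mu)))
         (at 1 within {\<alpha> \<in> {a<..<b} - {1}. (\<alpha> - 1) * \<kappa> \<ge> 0})"
proof -
  define c where "c = min (1 - a) (b - 1) / 2"
  have "c > 0" and c_in: "1 + c \<in> {a<..<b}" "1 - c \<in> {a<..<b}"
    using I by (auto simp: c_def min_def field_simps)
  have "D2_integral \<nu> p k c < \<infinity>" "D2_integral \<nu> p k (-c) < \<infinity>"
    using D2[OF c_in(1)] D2[OF c_in(2)] by (simp_all add: D2_integral_def)
  then interpret power_descent_envelope \<nu> mu k p c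
    using sf mu_prob k_meas k_norm p_meas k_pos p_pos mu_sets \<open>c > 0\<close>
    by (intro power_descent_envelope.intro power_descent_kernel.intro
        power_descent_kernel_axioms.intro power_descent_envelope_axioms.intro)
  have "h \<in> borel_measurable borel"
    using h_cont by (rule borel_measurable_continuous_onI)
  hence "((\<lambda>\<alpha>. \<integral>\<theta>. h \<theta> \<partial>PD_step \<nu> p k \<eta> \<kappa> \<alpha> mu) \<longlongrightarrow> (\<integral>\<theta>. h \<theta> \<partial>PD_one \<nu> p k \<eta> mu)) (at 1)"
    using h_bdd by (rule integral_PD_step_tendsto)
  thus ?thesis by (rule tendsto_within_subset) simp
qed

end
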